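(* Let $\Gamma$ be a $\Bbbk$-algebra and $\sim$ an equivalence relation on $\mathrm{cfs}(\Gamma)$. If $V$ is a finite-dimensional block module, then every composition factor of $V$ is isomorphic to $S_{\mathfrak m}$ for some $\mathfrak m\in B$ with $B\in\mathrm{Supp}(V)$.
   Context: $\mathrm{cfs}(\Gamma)$: maximal two-sided ideals $\mathfrak m$ of $\Gamma$ with $\dim\Gamma/\mathfrak m<\infty$; $S_{\mathfrak m}$ is the unique simple $\Gamma/\mathfrak m$-module. For a class $B$, $\mathcal W(B)=\{\mathfrak m_1\cdots\mathfrak m_k:k\ge0,\mathfrak m_i\in B\}$; for a $\Gamma$-module $V$, $V(B)=\{v:\mathfrak mv=0$ for some $\mathfrak m\in\mathcal W(B)\}$. $V$ is a block module if $V=\bigoplus_BV(B)$; $\mathrm{Supp}(V)=\{B:V(B)\neq0\}$. *)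

theory Defs
  imports Main
begin

text \<open>The algebra Gamma is a type 'a of class ring_1 (associative, unital,
  possibly noncommutative). It is a k-algebra via a unital ring homomorphism
  amap from the field 'k into the centre of Gamma. A (left) Gamma-module V is a
  type 'v of class ab_group_add together with an action act; the k-vector-space
  structure of V is the one induced by act (amap c).\<close>

definition k_algebra :: "('k::field \<Rightarrow> 'a::ring_1) \<Rightarrow> bool" where
  "k_algebra amap \<longleftrightarrow>
     amap 1 = 1 \<and>
     (\<forall>c d. amap (c + d) = amap c + amap d) \<and>
     (\<forall>c d. amap (c * d) = amap c * amap d) \<and>
     (\<forall>c x. amap c * x = x * amap c)"

definition gmodule :: "('a::ring_1 \<Rightarrow> 'v::ab_group_add \<Rightarrow> 'v) \<Rightarrow> bool" where
  "gmodule act \<longleftrightarrow>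
     (\<forall>v. act 1 v = v) \<and>
     (\<forall>a b v. act (a * b) v = act a (act b v)) \<and>
     (\<forall>a b v. act (a + b) v = act a v + act b v) \<and>
     (\<forall>a v w. act a (v + w) = act a v + act a w)"

definition two_sided_ideal :: "'a::ring_1 set \<Rightarrow> bool" where
  "two_sided_ideal I \<longleftrightarrow>
     0 \<in> I \<and> (\<forall>x\<in>I. \<forall>y\<in>I. x + y \<in> I) \<and> (\<forall>x\<in>I. - x \<in> I) \<and>
     (\<forall>x\<in>I. \<forall>r. r * x \<in> I \<and> x * r \<in> I)"

definition maximal_two_sided_ideal :: "'a::ring_1 set \<Rightarrow> bool" where
  "maximal_two_sided_ideal I \<longleftrightarrow>
     two_sided_ideal I \<and> I \<noteq> UNIV \<and>
     (\<forall>J. two_sided_ideal J \<and> I \<subseteq> J \<longrightarrow> J = I \<or> J = UNIV)"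

text \<open>dim_k (Gamma / m) < infinity: Gamma = span_k F + m for some finite F.\<close>
definition finite_codim :: "('k::field \<Rightarrow> 'a::ring_1) \<Rightarrow> 'a set \<Rightarrow> bool" where
  "finite_codim amap m \<longleftrightarrow>
     (\<exists>F. finite F \<and> (\<forall>x. \<exists>c. x - (\<Sum>f\<in>F. amap (c f) * f) \<in> m))"

definition cfs :: "('k::field \<Rightarrow> 'a::ring_1) \<Rightarrow> 'a set set" where
  "cfs amap = {m. maximal_two_sided_ideal m \<and> finite_codim amap m}"

definition ideal_mult :: "'a::ring_1 set \<Rightarrow> 'a set \<Rightarrow> 'a set" where
  "ideal_mult I J = {\<Sum>i<n. f i * g i | (n::nat) (f::nat \<Rightarrow> 'a) (g::nat \<Rightarrow> 'a). \<forall>i<n. f i \<in> I \<and> g i \<in> J}"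

fun ideal_prod :: "'a::ring_1 set list \<Rightarrow> 'a set" where
  "ideal_prod [] = UNIV"
| "ideal_prod (I # Is) = ideal_mult I (ideal_prod Is)"

definition W :: "'a::ring_1 set set \<Rightarrow> 'a set set" where
  "W B = {ideal_prod ms | ms. set ms \<subseteq> B}"

definition Vpart :: "('a::ring_1 \<Rightarrow> 'v::ab_group_add \<Rightarrow> 'v) \<Rightarrow> 'a set set \<Rightarrow> 'v set" where
  "Vpart act B = {v. \<exists>m\<in>W B. \<forall>x\<in>m. act x v = 0}"

text \<open>The blocks are the equivalence classes cfs(Gamma) // R.
  V is a block module if V is the (internal) direct sum of the V(B).\<close>
definition block_module ::
  "('k::field \<Rightarrow> 'a::ring_1) \<Rightarrow> 'a set rel \<Rightarrow> ('a \<Rightarrow> 'v::ab_group_add \<Rightarrow> 'v) \<Rightarrow> bool" where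
  "block_module amap R act \<longleftrightarrow>
     (\<forall>v. \<exists>Bs f. finite Bs \<and> Bs \<subseteq> cfs amap // R \<and>
            (\<forall>B\<in>Bs. f B \<in> Vpart act B) \<and> v = (\<Sum>B\<in>Bs. f B)) \<and>
     (\<forall>Bs f. finite Bs \<and> Bs \<subseteq> cfs amap // R \<and>
            (\<forall>B\<in>Bs. f B \<in> Vpart act B) \<and> (\<Sum>B\<in>Bs. f B) = 0
            \<longrightarrow> (\<forall>B\<in>Bs. f B = 0))"

definition Supp ::
  "('k::field \<Rightarrow> 'a::ring_1) \<Rightarrow> 'a set rel \<Rightarrow> ('a \<Rightarrow> 'v::ab_group_add \<Rightarrow> 'v) \<Rightarrow> 'a set set set" where
  "Supp amap R act = {B \<in> cfs amap // R. Vpart act B \<noteq> {0}}"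

definition fin_dim :: "('k::field \<Rightarrow> 'a::ring_1) \<Rightarrow> ('a \<Rightarrow> 'v::ab_group_add \<Rightarrow> 'v) \<Rightarrow> bool" where
  "fin_dim amap act \<longleftrightarrow>
     (\<exists>F. finite F \<and> (\<forall>v. \<exists>c. v = (\<Sum>f\<in>F. act (amap (c f)) f)))"

definition submodule :: "('a::ring_1 \<Rightarrow> 'v::ab_group_add \<Rightarrow> 'v) \<Rightarrow> 'v set \<Rightarrow> bool" where
  "submodule act N \<longleftrightarrow>
     0 \<in> N \<and> (\<forall>v\<in>N. \<forall>w\<in>N. v + w \<in> N) \<and> (\<forall>a. \<forall>v\<in>N. act a v \<in> N)"

definition simple_subquot :: "('a::ring_1 \<Rightarrow> 'v::ab_group_add \<Rightarrow> 'v) \<Rightarrow> 'v set \<Rightarrow> 'v set \<Rightarrow> bool" where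
  "simple_subquot act N M \<longleftrightarrow>
     submodule act N \<and> submodule act M \<and> N \<subset> M \<and>
     (\<forall>L. submodule act L \<and> N \<subseteq> L \<and> L \<subseteq> M \<longrightarrow> L = N \<or> L = M)"

definition composition_series :: "('a::ring_1 \<Rightarrow> 'v::ab_group_add \<Rightarrow> 'v) \<Rightarrow> 'v set list \<Rightarrow> bool" where
  "composition_series act Vs \<longleftrightarrow>
     Vs \<noteq> [] \<and> hd Vs = {0} \<and> last Vs = UNIV \<and>
     (\<forall>i. Suc i < length Vs \<longrightarrow> simple_subquot act (Vs ! i) (Vs ! Suc i))"

text \<open>(N, M) represents the composition factor M/N of V.\<close>
definition composition_factor :: "('a::ring_1 \<Rightarrow> 'v::ab_group_add \<Rightarrow> 'v) \<Rightarrow> 'v set \<Rightarrow> 'v set \<Rightarrow> bool" where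
  "composition_factor act N M \<longleftrightarrow>
     (\<exists>Vs i. composition_series act Vs \<and> Suc i < length Vs \<and> N = Vs ! i \<and> M = Vs ! Suc i)"

text \<open>S_m is the unique simple Gamma/m-module (inflated to Gamma). A simple subquotient
  M/N is isomorphic to S_m iff it is a (simple) Gamma/m-module, i.e. iff m annihilates M/N.\<close>
definition subquot_iso_S :: "('a::ring_1 \<Rightarrow> 'v::ab_group_add \<Rightarrow> 'v) \<Rightarrow> 'a set \<Rightarrow> 'v set \<Rightarrow> 'v set \<Rightarrow> bool" where
  "subquot_iso_S act m N M \<longleftrightarrow> simple_subquot act N M \<and> (\<forall>x\<in>m. \<forall>v\<in>M. act x v \<in> N)"

end

theory Submission
  imports Defs
begin

text \<open>The annihilator of a simple subquotient \<open>M/N\<close> behaves like a prime ideal: if a product of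
  two-sided ideals kills some \<open>w \<in> M - N\<close> modulo \<open>N\<close>, then one of the factors kills all of
  \<open>M/N\<close>, because \<open>M = N + \<Gamma>u\<close> for every \<open>u \<in> M - N\<close>. Now decompose \<open>w \<in> M - N\<close> into block
  components \<open>f B\<close>, each killed by a product of maximal ideals from \<open>B\<close>. Either the product
  belonging to one component already kills \<open>w\<close> modulo \<open>N\<close>, or some element \<open>y\<close> of it does
  not, and then \<open>y w \<in> M - N\<close> has one component fewer, since the products are right ideals.\<close>

definition subquot_annihilator :: "('a::ring_1 \<Rightarrow> 'v::ab_group_add \<Rightarrow> 'v) \<Rightarrow> 'v set \<Rightarrow> 'v set \<Rightarrow> 'a set"
  where "subquot_annihilator act N M = {x. \<forall>u\<in>M. act x u \<in> N}"

lemma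
  assumes "gmodule act"
  shows gmodule_act_one: "act 1 v = v"
    and gmodule_act_mult: "act (a * b) v = act a (act b v)"
    and gmodule_act_add_left: "act (a + b) v = act a v + act b v"
    and gmodule_act_add: "act a (v + w) = act a v + act a w"
  using assms unfolding gmodule_def by blast+

lemma
  assumes "gmodule act"
  shows gmodule_act_zero: "act a 0 = 0" and gmodule_act_zero_left: "act 0 v = 0"
proof -
  have "act a (0 + 0) = act a 0 + act a 0" and "act (0 + 0) v = act 0 v + act 0 v"
    using gmodule_act_add[OF assms] gmodule_act_add_left[OF assms] by blast+
  then show "act a 0 = 0" and "act 0 v = 0" by simp_all
qed

lemma gmodule_act_sum:
  assumes "gmodule act" and "finite I"
  shows "act y (\<Sum>i\<in>I. g i) = (\<Sum>i\<in>I. act y (g i))"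
  using assms(2)
  by (induction I rule: finite_induct) (simp_all add: assms(1) gmodule_act_zero gmodule_act_add)

lemma mult_mem_ideal_mult: "x \<in> I \<Longrightarrow> y \<in> J \<Longrightarrow> x * y \<in> ideal_mult I J"
  unfolding ideal_mult_def
  by (rule CollectI, rule exI[of _ 1], rule exI[of _ "\<lambda>_. x"], rule exI[of _ "\<lambda>_. y"]) simp

lemma ideal_prod_mult_right: "x \<in> ideal_prod ms \<Longrightarrow> x * r \<in> ideal_prod ms"
proof (induction ms arbitrary: x)
  case Nil
  then show ?case by simp
next
  case (Cons m ms)
  obtain n f g where x: "x = (\<Sum>i<(n::nat). f i * g i)"
    and fg: "\<forall>i<n. f i \<in> m \<and> g i \<in> ideal_prod ms"
    using Cons.prems unfolding ideal_prod.simps ideal_mult_def by blast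
  have "x * r = (\<Sum>i<n. f i * (g i * r))"
    unfolding x by (simp add: sum_distrib_right mult.assoc)
  moreover have "\<forall>i<n. f i \<in> m \<and> g i * r \<in> ideal_prod ms"
    using fg Cons.IH by blast
  ultimately show ?case
    unfolding ideal_prod.simps ideal_mult_def by (intro CollectI exI) (rule conjI)
qed

lemma cfs_two_sided_ideal: "m \<in> cfs amap \<Longrightarrow> two_sided_ideal m"
  unfolding cfs_def maximal_two_sided_ideal_def by blast

lemma Vpart_ideal_prod:
  assumes "equiv (cfs amap) R" and "B \<in> cfs amap // R" and "v \<in> Vpart act B"
  shows "\<exists>ms. set ms \<subseteq> B \<and> (\<forall>m\<in>set ms. two_sided_ideal m) \<and> (\<forall>x\<in>ideal_prod ms. act x v = 0)"
proof -
  obtain ms where "set ms \<subseteq> B" "\<forall>x\<in>ideal_prod ms. act x v = 0"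
    using assms(3) unfolding Vpart_def W_def by blast
  moreover have "B \<subseteq> cfs amap" using in_quotient_imp_subset[OF assms(1,2)] .
  ultimately show ?thesis by (blast intro: cfs_two_sided_ideal)
qed

lemma block_module_Supp_decomposition:
  assumes "block_module amap R act"
  obtains I f where "finite I" and "I \<subseteq> Supp amap R act" and "\<forall>B\<in>I. f B \<in> Vpart act B"
    and "v = (\<Sum>B\<in>I. f B)"
proof -
  obtain Bs f where Bs: "finite Bs" "Bs \<subseteq> cfs amap // R" "\<forall>B\<in>Bs. f B \<in> Vpart act B"
    and v: "v = (\<Sum>B\<in>Bs. f B)"
    using assms unfolding block_module_def by blast
  let ?I = "{B\<in>Bs. f B \<noteq> 0}"
  have "v = (\<Sum>B\<in>?I. f B)"
    unfolding v using Bs(1) by (intro sum.mono_neutral_right) auto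
  moreover have "?I \<subseteq> Supp amap R act" using Bs unfolding Supp_def by auto
  ultimately show ?thesis using Bs(1,3) by (intro that[of ?I f]) simp_all
qed

lemma submodule_act_mem: "submodule act N \<Longrightarrow> v \<in> N \<Longrightarrow> act a v \<in> N"
  unfolding submodule_def by blast

lemma simple_subquot_submodule:
  assumes "simple_subquot act N M"
  shows "submodule act N" and "submodule act M"
  using assms unfolding simple_subquot_def by blast+

lemma submodule_plus_cyclic:
  assumes gm: "gmodule act" and N: "submodule act N"
  shows "submodule act {n + act a u | n a. n \<in> N}"
  unfolding submodule_def
proof (intro conjI ballI allI)
  have "0 = 0 + act 0 u" and "0 \<in> N"
    using gmodule_act_zero_left[OF gm] N unfolding submodule_def by simp_all
  then show "0 \<in> {n + act a u | n a. n \<in> N}" by blast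
next
  fix v w assume "v \<in> {n + act a u | n a. n \<in> N}" "w \<in> {n + act a u | n a. n \<in> N}"
  then obtain n a n' b where "n \<in> N" "v = n + act a u" "n' \<in> N" "w = n' + act b u"
    by blast
  then have "v + w = (n + n') + act (a + b) u" and "n + n' \<in> N"
    using N unfolding submodule_def by (simp_all add: gmodule_act_add_left[OF gm] algebra_simps)
  then show "v + w \<in> {n + act a u | n a. n \<in> N}" by blast
next
  fix c v assume "v \<in> {n + act a u | n a. n \<in> N}"
  then obtain n a where "n \<in> N" "v = n + act a u" by blast
  then have "act c v = act c n + act (c * a) u" and "act c n \<in> N"
    using N by (simp_all add: gmodule_act_add[OF gm] gmodule_act_mult[OF gm] submodule_act_mem)
  then show "act c v \<in> {n + act a u | n a. n \<in> N}" by blast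
qed

lemma simple_subquot_eq_plus_cyclic:
  assumes gm: "gmodule act" and simple: "simple_subquot act N M"
    and "u \<in> M" and "u \<notin> N"
  shows "M = {n + act a u | n a. n \<in> N}" (is "M = ?L")
proof -
  have N: "submodule act N" and M: "submodule act M" and "N \<subset> M"
    and between: "\<And>L. submodule act L \<Longrightarrow> N \<subseteq> L \<Longrightarrow> L \<subseteq> M \<Longrightarrow> L = N \<or> L = M"
    using simple unfolding simple_subquot_def by blast+
  have "N \<subseteq> ?L"
  proof
    fix n assume "n \<in> N"
    moreover have "n = n + act 0 u" using gmodule_act_zero_left[OF gm] by simp
    ultimately show "n \<in> ?L" by blast
  qed
  moreover have "?L \<subseteq> M"
    using \<open>N \<subset> M\<close> \<open>u \<in> M\<close> M unfolding submodule_def by blast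
  moreover have "u \<in> ?L"
  proof -
    have "u = 0 + act 1 u" and "0 \<in> N"
      using gmodule_act_one[OF gm] N unfolding submodule_def by simp_all
    then show ?thesis by blast
  qed
  ultimately show ?thesis
    using between[OF submodule_plus_cyclic[OF gm N]] \<open>u \<notin> N\<close> by blast
qed

lemma simple_subquot_annihilator:
  assumes gm: "gmodule act" and simple: "simple_subquot act N M"
    and "u \<in> M" and "u \<notin> N"
    and right_closed: "\<forall>x\<in>m. \<forall>r. x * r \<in> m"
    and kills: "\<forall>x\<in>m. act x u \<in> N"
  shows "m \<subseteq> subquot_annihilator act N M"
  unfolding subquot_annihilator_def
proof (intro subsetI CollectI ballI)
  fix x v assume "x \<in> m" "v \<in> M"
  then obtain n a where "n \<in> N" "v = n + act a u"
    using simple_subquot_eq_plus_cyclic[OF gm simple \<open>u \<in> M\<close> \<open>u \<notin> N\<close>] by blast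
  moreover have "act (x * a) u \<in> N" using kills right_closed \<open>x \<in> m\<close> by blast
  moreover have "submodule act N" using simple by (rule simple_subquot_submodule)
  ultimately show "act x v \<in> N"
    unfolding submodule_def by (simp add: gmodule_act_add[OF gm] gmodule_act_mult[OF gm])
qed

lemma simple_subquot_ideal_prod_annihilator:
  assumes gm: "gmodule act" and simple: "simple_subquot act N M"
    and "\<forall>m\<in>set ms. two_sided_ideal m"
    and "w \<in> M" and "w \<notin> N" and "\<forall>x\<in>ideal_prod ms. act x w \<in> N"
  shows "\<exists>m\<in>set ms. m \<subseteq> subquot_annihilator act N M"
  using assms(3-)
proof (induction ms)
  case Nil
  then have "act 1 w \<in> N" by simp
  then show ?case using Nil.prems(3) by (simp add: gmodule_act_one[OF gm])
next
  case (Cons m ms)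
  show ?case
  proof (cases "\<forall>y\<in>ideal_prod ms. act y w \<in> N")
    case True
    then have "\<exists>m'\<in>set ms. m' \<subseteq> subquot_annihilator act N M"
      using Cons.IH Cons.prems(1-3) by simp
    then show ?thesis by auto
  next
    case False
    then obtain y where y: "y \<in> ideal_prod ms" "act y w \<notin> N" by blast
    have "act y w \<in> M"
      using simple_subquot_submodule(2)[OF simple] \<open>w \<in> M\<close> by (rule submodule_act_mem)
    moreover have "\<forall>x\<in>m. \<forall>r. x * r \<in> m"
      using Cons.prems(1) unfolding two_sided_ideal_def by simp
    moreover have "\<forall>x\<in>m. act x (act y w) \<in> N"
    proof
      fix x assume "x \<in> m"
      then have "x * y \<in> ideal_prod (m # ms)"
        using mult_mem_ideal_mult[OF _ y(1)] by simp
      then have "act (x * y) w \<in> N" using Cons.prems(4) by blast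
      then show "act x (act y w) \<in> N" by (simp add: gmodule_act_mult[OF gm])
    qed
    ultimately have "m \<subseteq> subquot_annihilator act N M"
      by (rule simple_subquot_annihilator[OF gm simple _ y(2)])
    then show ?thesis by simp
  qed
qed

lemma simple_subquot_sum_annihilator:
  assumes gm: "gmodule act" and simple: "simple_subquot act N M" and "finite I"
    and "\<forall>i\<in>I. \<forall>m\<in>set (ms i). two_sided_ideal m"
    and "\<forall>i\<in>I. \<forall>x\<in>ideal_prod (ms i). act x (g i) = 0"
    and "(\<Sum>i\<in>I. g i) \<in> M" and "(\<Sum>i\<in>I. g i) \<notin> N"
  shows "\<exists>i\<in>I. \<exists>m\<in>set (ms i). m \<subseteq> subquot_annihilator act N M"
  using assms(3-)
proof (induction I arbitrary: g rule: finite_induct)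
  case empty
  then show ?case using simple_subquot_submodule(1)[OF simple] unfolding submodule_def by simp
next
  case (insert i I)
  let ?w = "\<Sum>j\<in>insert i I. g j"
  show ?case
  proof (cases "\<forall>x\<in>ideal_prod (ms i). act x ?w \<in> N")
    case True
    then have "\<exists>m\<in>set (ms i). m \<subseteq> subquot_annihilator act N M"
      using simple_subquot_ideal_prod_annihilator[OF gm simple _ insert.prems(3,4)] insert.prems(1)
      by simp
    then show ?thesis by blast
  next
    case False
    then obtain y where y: "y \<in> ideal_prod (ms i)" "act y ?w \<notin> N" by blast
    have "act y ?w = act y (g i) + act y (\<Sum>j\<in>I. g j)"
      using insert.hyps by (simp add: gmodule_act_add[OF gm])
    also have "\<dots> = (\<Sum>j\<in>I. act y (g j))"
      using insert.prems(2) y(1) gmodule_act_sum[OF gm insert.hyps(1)] by simp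
    finally have w: "act y ?w = (\<Sum>j\<in>I. act y (g j))" .
    have "\<exists>j\<in>I. \<exists>m\<in>set (ms j). m \<subseteq> subquot_annihilator act N M"
    proof (rule insert.IH)
      show "\<forall>j\<in>I. \<forall>m\<in>set (ms j). two_sided_ideal m" using insert.prems(1) by simp
      show "\<forall>j\<in>I. \<forall>x\<in>ideal_prod (ms j). act x (act y (g j)) = 0"
      proof (intro ballI)
        fix j x assume "j \<in> I" "x \<in> ideal_prod (ms j)"
        then have "act (x * y) (g j) = 0" using insert.prems(2) ideal_prod_mult_right by blast
        then show "act x (act y (g j)) = 0" by (simp add: gmodule_act_mult[OF gm])
      qed
      show "(\<Sum>j\<in>I. act y (g j)) \<in> M"
        using simple_subquot_submodule(2)[OF simple] insert.prems(3) w
        by (metis submodule_act_mem)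
      show "(\<Sum>j\<in>I. act y (g j)) \<notin> N" using y(2) w by simp
    qed
    then show ?thesis by blast
  qed
qed

theorem mainTheorem16:
  fixes amap :: "'k::field \<Rightarrow> 'a::ring_1"
    and R :: "'a set rel"
    and act :: "'a \<Rightarrow> 'v::ab_group_add \<Rightarrow> 'v"
  assumes "k_algebra amap"
    and "equiv (cfs amap) R"
    and "gmodule act"
    and "fin_dim amap act"
    and "block_module amap R act"
    and "composition_factor act N M"
  shows "\<exists>B\<in>Supp amap R act. \<exists>m\<in>B. subquot_iso_S act m N M"
proof -
  have simple: "simple_subquot act N M"
    using assms(6) unfolding composition_factor_def composition_series_def by blast
  then obtain w where "w \<in> M" "w \<notin> N" unfolding simple_subquot_def by blast
  obtain I f where I: "finite I" "I \<subseteq> Supp amap R act" "\<forall>B\<in>I. f B \<in> Vpart act B"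
    and w: "w = (\<Sum>B\<in>I. f B)"
    using block_module_Supp_decomposition[OF assms(5)] .
  have "I \<subseteq> cfs amap // R" using I(2) unfolding Supp_def by blast
  then have "\<forall>B\<in>I. \<exists>ms. set ms \<subseteq> B \<and> (\<forall>m\<in>set ms. two_sided_ideal m) \<and>
      (\<forall>x\<in>ideal_prod ms. act x (f B) = 0)"
    using Vpart_ideal_prod[OF assms(2)] I(3) by blast
  then obtain ms where ms: "\<forall>B\<in>I. set (ms B) \<subseteq> B \<and> (\<forall>m\<in>set (ms B). two_sided_ideal m) \<and>
      (\<forall>x\<in>ideal_prod (ms B). act x (f B) = 0)"
    by (rule bchoice[THEN exE])
  have "\<exists>B\<in>I. \<exists>m\<in>set (ms B). m \<subseteq> subquot_annihilator act N M"
    by (rule simple_subquot_sum_annihilator[OF assms(3) simple \<open>finite I\<close>])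
      (use ms w \<open>w \<in> M\<close> \<open>w \<notin> N\<close> in auto)
  then obtain B m where "B \<in> I" "m \<in> set (ms B)" "m \<subseteq> subquot_annihilator act N M"
    by blast
  moreover from this ms have "m \<in> B" by blast
  ultimately show ?thesis
    using I(2) simple unfolding subquot_iso_S_def subquot_annihilator_def by blast
qed

end
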